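(* Let $K$ be a graph with a designated set of edges called virtual edges, let $\Sigma(K)$ be the set of distinct endpoint-pairs of its virtual edges, and let $A(K)$ be the set of vertices $v$ of $K$ such that $v$ is universal in $K$, $v$ is incident with a pair of parallel edges, and every virtual edge of $K$ is incident with $v$. If $K$ admits a half-edge $2$-colouring making it a W-cone in which every virtual edge is bichromatic, then the apex of every such W-cone colouring belongs to $A(K)$. Moreover: (1) if $|\Sigma(K)|\ge 2$, then $A(K)$ is a singleton; (2) if $\Sigma(K)=\{\{x,y\}\}$, then $A(K)\subseteq\{x,y\}$.
   Context: Graphs may have parallel edges but no loops. A vertex is universal if it is adjacent to all other vertices. A half-edge $2$-colouring $d$ assigns to each pair $(e,w)$ with $w$ an endpoint of edge $e$ a colour in $\{0,1\}$ (0 = blue, 1 = red). An edge $e=uv$ is bichromatic if $d(e,u)\neq d(e,v)$ and monochromatic otherwise; $E_b$, $E_m$ denote the bichromatic and monochromatic edge sets; standing convention: monochromatic edges are blue at both ends. A graph is matching-covered if every edge lies in some perfect matching. A W-cone is a half-edge $2$-coloured matching-covered graph $(K,d)$ containing a universal vertex $v$ (the apex) such that the set of edges incident with $v$ equals $E_b(K)$, $E(K-v)=E_m(K)$, and every vertex $u$ is incident with an edge $e$ with $d(e,u)=1$. *)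

theory Defs
  imports Main
begin

text \<open>A finite multigraph without loops: vertex set V, edge set E, and an
  endpoint map; each edge has exactly two distinct endpoints in V.
  Parallel edges are distinct edges with the same endpoint set.\<close>
definition multigraph :: "'v set \<Rightarrow> 'e set \<Rightarrow> ('e \<Rightarrow> 'v set) \<Rightarrow> bool" where
  "multigraph V E ends \<longleftrightarrow> finite V \<and> finite E \<and>
     (\<forall>e\<in>E. ends e \<subseteq> V \<and> card (ends e) = 2)"

definition universal :: "'v set \<Rightarrow> 'e set \<Rightarrow> ('e \<Rightarrow> 'v set) \<Rightarrow> 'v \<Rightarrow> bool" where
  "universal V E ends v \<longleftrightarrow> v \<in> V \<and>
     (\<forall>u\<in>V. u \<noteq> v \<longrightarrow> (\<exists>e\<in>E. ends e = {u, v}))"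

definition perfect_matching :: "'v set \<Rightarrow> 'e set \<Rightarrow> ('e \<Rightarrow> 'v set) \<Rightarrow> 'e set \<Rightarrow> bool" where
  "perfect_matching V E ends M \<longleftrightarrow> M \<subseteq> E \<and>
     (\<forall>u\<in>V. \<exists>!e. e \<in> M \<and> u \<in> ends e)"

definition matching_covered :: "'v set \<Rightarrow> 'e set \<Rightarrow> ('e \<Rightarrow> 'v set) \<Rightarrow> bool" where
  "matching_covered V E ends \<longleftrightarrow>
     (\<forall>e\<in>E. \<exists>M. perfect_matching V E ends M \<and> e \<in> M)"

text \<open>Half-edge 2-colouring d: d e w is the colour of the half-edge (e,w);
  False = 0 = blue, True = 1 = red.\<close>
definition bichromatic :: "('e \<Rightarrow> 'v set) \<Rightarrow> ('e \<Rightarrow> 'v \<Rightarrow> bool) \<Rightarrow> 'e \<Rightarrow> bool" where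
  "bichromatic ends d e \<longleftrightarrow> (\<exists>u w. ends e = {u, w} \<and> d e u \<noteq> d e w)"

text \<open>W-cone with apex a (including the standing convention that
  monochromatic edges are blue at both ends).\<close>
definition wcone :: "'v set \<Rightarrow> 'e set \<Rightarrow> ('e \<Rightarrow> 'v set) \<Rightarrow> ('e \<Rightarrow> 'v \<Rightarrow> bool) \<Rightarrow> 'v \<Rightarrow> bool" where
  "wcone V E ends d a \<longleftrightarrow>
     matching_covered V E ends \<and>
     universal V E ends a \<and>
     {e\<in>E. a \<in> ends e} = {e\<in>E. bichromatic ends d e} \<and>
     {e\<in>E. a \<notin> ends e} = {e\<in>E. \<not> bichromatic ends d e} \<and>
     (\<forall>e\<in>E. \<not> bichromatic ends d e \<longrightarrow> (\<forall>w\<in>ends e. \<not> d e w)) \<and>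
     (\<forall>u\<in>V. \<exists>e\<in>E. u \<in> ends e \<and> d e u)"

definition virt_pairs :: "('e \<Rightarrow> 'v set) \<Rightarrow> 'e set \<Rightarrow> 'v set set" where
  "virt_pairs ends X = ends ` X"

definition apex_cands :: "'v set \<Rightarrow> 'e set \<Rightarrow> ('e \<Rightarrow> 'v set) \<Rightarrow> 'e set \<Rightarrow> 'v set" where
  "apex_cands V E ends X = {v\<in>V. universal V E ends v \<and>
     (\<exists>e1\<in>E. \<exists>e2\<in>E. e1 \<noteq> e2 \<and> ends e1 = ends e2 \<and> v \<in> ends e1) \<and>
     (\<forall>e\<in>X. v \<in> ends e)}"

end

theory Submission
  imports Defs
begin

text \<open>Let \<open>a\<close> be the apex of a W-cone. Some half-edge at \<open>a\<close> is red, on an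
  edge \<open>ab\<close>, which is bichromatic, so its half at \<open>b\<close> is blue. Some other
  half-edge at \<open>b\<close> is red; its edge cannot be monochromatic (those are
  blue), hence it is bichromatic, hence incident with \<open>a\<close>: a second edge \<open>ab\<close>.
  Every bichromatic edge, in particular every virtual edge, meets the apex, so
  \<open>a \<in> A(K)\<close>. Finally \<open>A(K)\<close> lies in every pair of \<open>\<Sigma>(K)\<close>, and two distinct
  pairs share at most one vertex.\<close>

lemma card_2_common_elements_eq:
  assumes "card p = 2" "card q = 2" "p \<noteq> q"
    and "u \<in> p" "u \<in> q" "v \<in> p" "v \<in> q"
  shows "u = v"
  using assms by (auto simp: card_2_iff doubleton_eq_iff)

lemma two_le_card_obtain_distinct:
  assumes "2 \<le> card F"
  obtains p q where "p \<in> F" "q \<in> F" "p \<noteq> q"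
proof -
  have "finite F" using assms card.infinite by fastforce
  then show ?thesis using assms that card_le_Suc0_iff_eq[of F] by fastforce
qed

lemma multigraph_edge_other_end:
  assumes "multigraph V E ends" "e \<in> E" "a \<in> ends e"
  obtains b where "ends e = {a, b}" "b \<noteq> a" "b \<in> V"
proof -
  obtain x y where "ends e = {x, y}" "x \<noteq> y" "ends e \<subseteq> V"
    using assms(1,2) unfolding multigraph_def card_2_iff by blast
  then show ?thesis using that assms(3) by auto
qed

lemma wcone_apex_in_ends_iff:
  assumes "wcone V E ends d a" "e \<in> E"
  shows "a \<in> ends e \<longleftrightarrow> bichromatic ends d e"
  using assms unfolding wcone_def by blast

lemma bichromatic_doubleton:
  assumes "bichromatic ends d e" "ends e = {a, b}"
  shows "d e a \<noteq> d e b"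
  using assms unfolding bichromatic_def by (auto simp: doubleton_eq_iff)

lemma wcone_apex_parallel_edges:
  assumes mg: "multigraph V E ends" and wc: "wcone V E ends d a"
  shows "\<exists>e1\<in>E. \<exists>e2\<in>E. e1 \<noteq> e2 \<and> ends e1 = ends e2 \<and> a \<in> ends e1"
proof -
  have red: "\<forall>u\<in>V. \<exists>e\<in>E. u \<in> ends e \<and> d e u"
    and mono_blue: "\<forall>e\<in>E. \<not> bichromatic ends d e \<longrightarrow> (\<forall>w\<in>ends e. \<not> d e w)"
    and "a \<in> V"
    using wc unfolding wcone_def universal_def by auto
  obtain e where e: "e \<in> E" "a \<in> ends e" "d e a" using red \<open>a \<in> V\<close> by blast
  obtain b where b: "ends e = {a, b}" "b \<noteq> a" "b \<in> V"
    using multigraph_edge_other_end[OF mg e(1,2)] .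
  have "bichromatic ends d e" using wcone_apex_in_ends_iff[OF wc e(1)] e(2) by blast
  then have "d e a \<noteq> d e b" using b(1) by (rule bichromatic_doubleton)
  with e(3) have "\<not> d e b" by blast
  obtain e' where e': "e' \<in> E" "b \<in> ends e'" "d e' b" using red b(3) by blast
  then have "bichromatic ends d e'" using mono_blue by blast
  then have "a \<in> ends e'" using wcone_apex_in_ends_iff[OF wc e'(1)] by blast
  then have "ends e' = ends e"
    using card_2_common_elements_eq[of "ends e'" "ends e" a b] mg e e' b
    unfolding multigraph_def by auto
  moreover have "e \<noteq> e'" using \<open>\<not> d e b\<close> e'(3) by blast
  ultimately show ?thesis using e e' by metis
qed

lemma wcone_apex_in_apex_cands:
  assumes "multigraph V E ends" "X \<subseteq> E"
    and wc: "wcone V E ends d a" and "\<forall>e\<in>X. bichromatic ends d e"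
  shows "a \<in> apex_cands V E ends X"
proof -
  have "universal V E ends a" using wc unfolding wcone_def by blast
  moreover have "\<forall>e\<in>X. a \<in> ends e"
    using assms wcone_apex_in_ends_iff[OF wc] by blast
  ultimately show ?thesis
    using wcone_apex_parallel_edges[OF assms(1) wc]
    unfolding apex_cands_def universal_def by blast
qed

lemma apex_cands_subset_Inter_virt_pairs:
  "apex_cands V E ends X \<subseteq> \<Inter> (virt_pairs ends X)"
  unfolding apex_cands_def virt_pairs_def by blast

lemma apex_cands_subsingleton:
  assumes "multigraph V E ends" "X \<subseteq> E" "2 \<le> card (virt_pairs ends X)"
    and "u \<in> apex_cands V E ends X" "v \<in> apex_cands V E ends X"
  shows "u = v"
proof -
  obtain p q where pq: "p \<in> virt_pairs ends X" "q \<in> virt_pairs ends X" "p \<noteq> q"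
    using two_le_card_obtain_distinct[OF assms(3)] .
  have card_p: "card p = 2" and card_q: "card q = 2"
    using pq assms(1,2) unfolding multigraph_def virt_pairs_def by auto
  have "u \<in> \<Inter> (virt_pairs ends X)" "v \<in> \<Inter> (virt_pairs ends X)"
    using apex_cands_subset_Inter_virt_pairs[of V E ends X] assms(4,5) by blast+
  then have "u \<in> p" "u \<in> q" "v \<in> p" "v \<in> q" using pq(1,2) by auto
  then show ?thesis by (rule card_2_common_elements_eq[OF card_p card_q pq(3)])
qed

theorem mainTheorem17:
  fixes V :: "'v set" and E :: "'e set" and ends :: "'e \<Rightarrow> 'v set" and X :: "'e set"
  assumes "multigraph V E ends"
    and "X \<subseteq> E"
    and "\<exists>d a. wcone V E ends d a \<and> (\<forall>e\<in>X. bichromatic ends d e)"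
  shows "(\<forall>d a. wcone V E ends d a \<and> (\<forall>e\<in>X. bichromatic ends d e)
            \<longrightarrow> a \<in> apex_cands V E ends X)
     \<and> (card (virt_pairs ends X) \<ge> 2 \<longrightarrow> (\<exists>a. apex_cands V E ends X = {a}))
     \<and> (\<forall>x y. virt_pairs ends X = {{x, y}} \<longrightarrow> apex_cands V E ends X \<subseteq> {x, y})"
proof (intro conjI)
  show "\<forall>d a. wcone V E ends d a \<and> (\<forall>e\<in>X. bichromatic ends d e)
            \<longrightarrow> a \<in> apex_cands V E ends X"
    using wcone_apex_in_apex_cands[OF assms(1,2)] by blast
  then obtain a where a: "a \<in> apex_cands V E ends X" using assms(3) by blast
  show "card (virt_pairs ends X) \<ge> 2 \<longrightarrow> (\<exists>a. apex_cands V E ends X = {a})"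
  proof
    assume "card (virt_pairs ends X) \<ge> 2"
    then have "apex_cands V E ends X = {a}"
      using a apex_cands_subsingleton[OF assms(1,2)] by blast
    then show "\<exists>a. apex_cands V E ends X = {a}" ..
  qed
  show "\<forall>x y. virt_pairs ends X = {{x, y}} \<longrightarrow> apex_cands V E ends X \<subseteq> {x, y}"
    using apex_cands_subset_Inter_virt_pairs[of V E ends X] by (intro allI impI) simp
qed

end
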